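(* Let $N\geq 1$, $q=2^N$, let $\pi$ be a permutation of $\{0,1,\ldots,q-1\}$, and let $(I,F_\pi,\lambda)$ be the rotated odometer $F_\pi=\mathfrak{a}\circ R_\pi$ on $I=[0,1)$ with Lebesgue measure $\lambda$. Then there exists an automorphism $\widetilde F_\pi\in Aut(T_N)$ of the grafted binary tree $T_N$ and a measurable isomorphism $$\phi:(I,F_\pi,\lambda)\to(\partial T_N,\widetilde F_\pi,\mu_N)$$ such that $\widetilde F_\pi\circ\phi=\phi\circ F_\pi$, where $\widetilde F_\pi$ also denotes the homeomorphism of $\partial T_N$ induced by the automorphism.
   Context: The von Neumann–Kakutani map $\mathfrak{a}:[0,1)\to[0,1)$ is $\mathfrak{a}(x)=x-(1-3\cdot 2^{-n})$ if $x\in[1-2^{1-n},1-2^{-n})$, $n\geq1$. For $q\in\mathbb{N}$ divide $I=[0,1)$ into the $q$ half-open intervals $[k/q,(k+1)/q)$, $0\le k<q$; for a permutation $\pi$ of $q$ symbols, $R_\pi:I\to I$ is the interval exchange translating $[k/q,(k+1)/q)$ onto $[\pi(k)/q,(\pi(k)+1)/q)$. The rotated odometer is $F_\pi=\mathfrak{a}\circ R_\pi$. The grafted binary tree $T_N$ has vertex set $V=\bigsqcup_{i\ge0}V_i$ with $|V_0|=1$ (the root), $|V_1|=2^N$, $|V_i|=2^{N+i-1}$ for $i\ge2$; the root is joined by edges to all $2^N$ vertices of $V_1$, and for $i\ge1$ each vertex of $V_i$ is joined to exactly two vertices of $V_{i+1}$ and exactly one of $V_{i-1}$. Vertices of $V_1$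 are labelled by $\{0,\ldots,2^N-1\}$, and the two children of the vertex $w_1\cdots w_i$ are $w_1\cdots w_i0$ and $w_1\cdots w_i1$. The boundary is $\partial T_N=\{0,\ldots,2^N-1\}\times\prod_{i\ge2}\{0,1\}$ (infinite paths from the root), with product topology (a Cantor set). An automorphism of $T_N$ is a bijection of vertices (and edges) preserving adjacency (hence levels); $Aut(T_N)$ is the group of these, and each induces a homeomorphism of $\partial T_N$. The Bernoulli measure $\mu_N$ on $\partial T_N$ gives each cylinder $[w_1\cdots w_i]$ (paths beginning with $w_1\cdots w_i$) mass $2^{-N-i+1}$. *)

theory Defs
  imports "HOL-Analysis.Analysis" "HOL-Combinatorics.Permutations"
begin

text \<open>For x in [0,1), the unique n \<ge> 1 with x in [1 - 2^(1-n), 1 - 2^(-n)) is the least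
  n \<ge> 1 with x < 1 - 2^(-n).\<close>
definition vnk_index :: "real \<Rightarrow> nat" where
  "vnk_index x = (LEAST n. n \<ge> 1 \<and> x < 1 - 1 / 2 ^ n)"

definition vnk :: "real \<Rightarrow> real" where
  "vnk x = x - (1 - 3 / 2 ^ vnk_index x)"

definition iet :: "nat \<Rightarrow> (nat \<Rightarrow> nat) \<Rightarrow> real \<Rightarrow> real" where
  "iet q \<pi> x = (let k = nat \<lfloor>real q * x\<rfloor> in x + (real (\<pi> k) - real k) / real q)"

definition rot_odometer :: "nat \<Rightarrow> (nat \<Rightarrow> nat) \<Rightarrow> real \<Rightarrow> real" where
  "rot_odometer q \<pi> = vnk \<circ> iet q \<pi>"

definition leb_I :: "real measure" where
  "leb_I = restrict_space lborel {0..<1}"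

text \<open>Vertices: the root is None; a vertex w_1 w_2 ... w_i of level i \<ge> 1 is
  Some (w_1, [w_2,...,w_i]) with w_1 < 2^N and w_2,...,w_i binary digits (bool).\<close>
type_synonym vertex = "(nat \<times> bool list) option"

definition tree_V :: "nat \<Rightarrow> vertex set" where
  "tree_V N = {None} \<union> {Some (a, bs) | a bs. a < 2 ^ N}"

fun tree_parent :: "vertex \<Rightarrow> vertex" where
  "tree_parent None = None"
| "tree_parent (Some (a, [])) = None"
| "tree_parent (Some (a, bs)) = Some (a, butlast bs)"

definition tree_adj :: "vertex \<Rightarrow> vertex \<Rightarrow> bool" where
  "tree_adj u v \<longleftrightarrow> (u \<noteq> None \<and> tree_parent u = v) \<or> (v \<noteq> None \<and> tree_parent v = u)"

definition tree_aut :: "nat \<Rightarrow> (vertex \<Rightarrow> vertex) \<Rightarrow> bool" where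
  "tree_aut N g \<longleftrightarrow> bij_betw g (tree_V N) (tree_V N) \<and>
     (\<forall>u\<in>tree_V N. \<forall>v\<in>tree_V N. tree_adj u v \<longleftrightarrow> tree_adj (g u) (g v))"

text \<open>A boundary point (w_1, s) corresponds to the infinite path
  root, w_1, w_1 s_0, w_1 s_0 s_1, ...; the boundary is {..<2^N} \<times> (nat \<Rightarrow> bool).\<close>
type_synonym bpoint = "nat \<times> (nat \<Rightarrow> bool)"

definition path_vertex :: "bpoint \<Rightarrow> nat \<Rightarrow> vertex" where
  "path_vertex x k = Some (fst x, map (snd x) [0..<k])"

text \<open>Homeomorphism of the boundary induced by an automorphism g: the image path
  is the path through the images of the vertices of the original path.\<close>
definition bdry_map :: "(vertex \<Rightarrow> vertex) \<Rightarrow> bpoint \<Rightarrow> bpoint" where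
  "bdry_map g x = (fst (the (g (path_vertex x 0))),
                   \<lambda>i. last (snd (the (g (path_vertex x (Suc i))))))"

text \<open>Bernoulli measure: uniform on the 2^N first letters, fair coins afterwards; the
  cylinder [w_1 ... w_i] gets mass 2^(-N-i+1).\<close>
definition mu_N :: "nat \<Rightarrow> bpoint measure" where
  "mu_N N = uniform_count_measure {..<(2::nat) ^ N} \<Otimes>\<^sub>M
            (\<Pi>\<^sub>M i\<in>(UNIV::nat set). uniform_count_measure (UNIV::bool set))"

definition meas_iso_conj ::
  "'a measure \<Rightarrow> ('a \<Rightarrow> 'a) \<Rightarrow> 'b measure \<Rightarrow> ('b \<Rightarrow> 'b) \<Rightarrow> ('a \<Rightarrow> 'b) \<Rightarrow> bool" where
  "meas_iso_conj M T M' T' \<phi> \<longleftrightarrow>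
     (\<exists>X Y. X \<in> sets M \<and> Y \<in> sets M' \<and>
        emeasure M (space M - X) = 0 \<and> emeasure M' (space M' - Y) = 0 \<and>
        T ` X \<subseteq> X \<and> T' ` Y \<subseteq> Y \<and>
        bij_betw \<phi> X Y \<and>
        \<phi> \<in> measurable (restrict_space M X) (restrict_space M' Y) \<and>
        the_inv_into X \<phi> \<in> measurable (restrict_space M' Y) (restrict_space M X) \<and>
        (\<forall>A\<in>sets M'. emeasure M (\<phi> -` A \<inter> X) = emeasure M' A) \<and>
        (\<forall>x\<in>X. \<phi> (T x) = T' (\<phi> x)))"

end

(* Write x in [0,1) as (k + y) / 2^N with k < 2^N and y in [0,1), and code it by the boundary
   point (k, binary digits of y). Binary digits of a uniform point are independent fair coins, so
   this coding carries Lebesgue measure to mu_N. The interval exchange only permutes the first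
   letter k. The map vnk permutes the dyadic blocks of level N: it translates every block but the
   last, and maps the last block onto the first one as a scaled copy of vnk itself; and in binary
   digits vnk is the adding machine (add one, carry to the right). Hence, under the coding, the
   rotated odometer becomes the tree automorphism that relabels the first letter and adds one to
   the rest of the path exactly on the subtree that pi sends to the last block. *)

theory Submission
  imports Defs "HOL-Probability.Probability"
begin

definition bin_digit :: "real \<Rightarrow> nat \<Rightarrow> bool" where
  "bin_digit y j = odd \<lfloor>2 ^ Suc j * y\<rfloor>"

lemma bin_digit_Suc: "bin_digit y (Suc j) = bin_digit (2 * y) j"
  unfolding bin_digit_def by (simp add: mult.assoc)

lemma bin_digit_add_of_int: "bin_digit (y + of_int m) = bin_digit y"
proof
  fix j
  have "2 ^ Suc j * (y + of_int m) = 2 ^ Suc j * y + of_int (2 * (2 ^ j * m))"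
    by (simp add: algebra_simps)
  hence "\<lfloor>2 ^ Suc j * (y + of_int m)\<rfloor> = \<lfloor>2 ^ Suc j * y\<rfloor> + 2 * (2 ^ j * m)"
    by (simp only: floor_add_int)
  thus "bin_digit (y + of_int m) j = bin_digit y j" unfolding bin_digit_def by simp
qed

lemma bin_digit_shift: "bin_digit (2 * y - of_bool b) j = bin_digit y (Suc j)"
  using bin_digit_add_of_int[of "2 * y" "- of_bool b"] by (simp add: bin_digit_Suc)

lemma bin_digit_0:
  assumes "0 \<le> y" "y < 1"
  shows "bin_digit y 0 \<longleftrightarrow> 1/2 \<le> y"
proof -
  have "\<lfloor>2 * y\<rfloor> = of_bool (1/2 \<le> y)" using assms by (simp add: floor_eq_iff)
  thus ?thesis unfolding bin_digit_def by simp
qed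

lemma floor_double: "\<lfloor>2 * t\<rfloor> = 2 * \<lfloor>t\<rfloor> + of_bool (odd \<lfloor>2 * t\<rfloor>)" for t :: real
proof -
  have "2 * \<lfloor>t\<rfloor> \<le> \<lfloor>2 * t\<rfloor>" "\<lfloor>2 * t\<rfloor> < 2 * \<lfloor>t\<rfloor> + 2"
    by (simp_all add: le_floor_iff floor_less_iff) linarith+
  thus ?thesis by (cases "odd \<lfloor>2 * t\<rfloor>") (auto, presburger+)
qed

lemma dyadic_floor_tendsto: "(\<lambda>n. of_int \<lfloor>2 ^ n * y\<rfloor> / 2 ^ n) \<longlonglongrightarrow> (y::real)"
proof -
  have bound: "\<bar>of_int \<lfloor>2 ^ n * y\<rfloor> / 2 ^ n - y\<bar> \<le> 1 / 2 ^ n" for n :: nat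
  proof -
    have "\<bar>of_int \<lfloor>2 ^ n * y\<rfloor> - 2 ^ n * y\<bar> / 2 ^ n \<le> 1 / 2 ^ n"
      by (intro divide_right_mono) (linarith, simp)
    moreover have "\<bar>of_int \<lfloor>2 ^ n * y\<rfloor> / 2 ^ n - y\<bar> = \<bar>of_int \<lfloor>2 ^ n * y\<rfloor> - 2 ^ n * y\<bar> / 2 ^ n"
      by (simp add: field_simps abs_divide[symmetric] del: abs_divide)
    ultimately show ?thesis by simp
  qed
  have "(\<lambda>n::nat. 1 / 2 ^ n :: real) \<longlonglongrightarrow> 0"
    by (simp add: LIMSEQ_inverse_realpow_zero divide_inverse)
  hence "(\<lambda>n. of_int \<lfloor>2 ^ n * y\<rfloor> / 2 ^ n - y) \<longlonglongrightarrow> 0"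
    by (rule Lim_null_comparison[OF always_eventually, rotated]) (simp add: bound)
  thus ?thesis by (simp add: LIM_zero_iff)
qed

text \<open>Since \<open>of_bool (bin_digit y j) = \<lfloor>2 ^ Suc j * y\<rfloor> - 2 * \<lfloor>2 ^ j * y\<rfloor>\<close>, the partial sums
  telescope to \<open>\<lfloor>2 ^ n * y\<rfloor> / 2 ^ n - \<lfloor>y\<rfloor>\<close>.\<close>
lemma bin_digit_sums: "(\<lambda>j. of_bool (bin_digit y j) / 2 ^ Suc j) sums frac y"
proof -
  let ?f = "\<lambda>n. of_int \<lfloor>2 ^ n * y\<rfloor> / 2 ^ n :: real"
  have digit: "of_bool (bin_digit y j) / 2 ^ Suc j = ?f (Suc j) - ?f j" for j
  proof -
    have "real_of_int \<lfloor>2 ^ Suc j * y\<rfloor> = 2 * of_int \<lfloor>2 ^ j * y\<rfloor> + of_bool (bin_digit y j)"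
      using arg_cong[OF floor_double[of "2 ^ j * y"], of real_of_int]
      unfolding bin_digit_def by (simp add: mult.assoc)
    thus ?thesis by (simp add: field_simps)
  qed
  have partial_sums: "(\<lambda>n. \<Sum>j<n. of_bool (bin_digit y j) / 2 ^ Suc j) = (\<lambda>n. ?f n - ?f 0)"
    unfolding digit by (rule ext) (rule sum_lessThan_telescope)
  have "(\<lambda>n. ?f n - ?f 0) \<longlonglongrightarrow> y - ?f 0"
    by (intro tendsto_diff dyadic_floor_tendsto tendsto_const)
  thus ?thesis unfolding sums_def partial_sums frac_def by simp
qed

lemma bin_digit_measurable [measurable]: "(\<lambda>y. bin_digit y j) \<in> measurable borel (count_space UNIV)"
  unfolding bin_digit_def by measurable

section \<open>The von Neumann--Kakutani map on dyadic blocks\<close>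

lemma vnk_indexI:
  assumes "1 \<le> m" "1 - 2 / 2 ^ m \<le> x" "x < 1 - 1 / 2 ^ m"
  shows "vnk_index x = m"
  unfolding vnk_index_def
proof (rule Least_equality)
  show "1 \<le> m \<and> x < 1 - 1 / 2 ^ m" using assms by simp
  fix n assume n: "1 \<le> n \<and> x < 1 - 1 / (2::real) ^ n"
  show "m \<le> n"
  proof (rule ccontr)
    assume "\<not> m \<le> n"
    hence "(2::real) ^ Suc n \<le> 2 ^ m" by (intro power_increasing) auto
    hence "2 / (2::real) ^ m \<le> 1 / 2 ^ n" by (simp add: field_simps)
    with n assms(2) show False by linarith
  qed
qed

lemma vnk_index_bounds:
  assumes "0 \<le> x" "x < 1"
  shows "1 \<le> vnk_index x" "1 - 2 / 2 ^ vnk_index x \<le> x" "x < 1 - 1 / 2 ^ vnk_index x"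
proof -
  let ?P = "\<lambda>n. 1 \<le> n \<and> x < 1 - 1 / (2::real) ^ n"
  obtain n where "(1/2::real) ^ n < 1 - x"
    using real_arch_pow_inv[of "1 - x" "1/2"] assms by auto
  moreover have "1 / (2::real) ^ Suc n \<le> (1/2) ^ n" by (simp add: field_simps)
  ultimately have "?P (Suc n)" by simp
  hence P: "?P (vnk_index x)" unfolding vnk_index_def by (rule LeastI)
  thus "1 \<le> vnk_index x" "x < 1 - 1 / 2 ^ vnk_index x" by auto
  show "1 - 2 / 2 ^ vnk_index x \<le> x"
  proof (cases "vnk_index x = 1")
    case False
    with P have "1 \<le> vnk_index x - 1" by linarith
    moreover have "\<not> ?P (vnk_index x - 1)"
      unfolding vnk_index_def by (rule not_less_Least) (use P False in \<open>simp add: vnk_index_def\<close>)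
    ultimately have "1 - 1 / 2 ^ (vnk_index x - 1) \<le> x" by simp
    moreover have "(2::real) ^ vnk_index x = 2 * 2 ^ (vnk_index x - 1)"
      using P by (simp flip: power_Suc)
    ultimately show ?thesis by simp
  qed (use assms in simp)
qed

lemma vnk_in_unit:
  assumes "0 \<le> x" "x < 1"
  shows "0 < vnk x" "vnk x < 1"
proof -
  note m = vnk_index_bounds[OF assms]
  have "(2::real) ^ 1 \<le> 2 ^ vnk_index x" using m(1) by (intro power_increasing) auto
  thus "0 < vnk x" "vnk x < 1" using m unfolding vnk_def by (auto simp: field_simps)
qed

lemma vnk_lower_half: "0 \<le> y \<Longrightarrow> y < 1/2 \<Longrightarrow> vnk y = y + 1/2"
  using vnk_indexI[of 1 y] unfolding vnk_def by simp

lemma vnk_upper_half: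
  assumes "1/2 \<le> y" "y < 1"
  shows "vnk y = vnk (2 * y - 1) / 2"
proof -
  let ?m = "vnk_index (2 * y - 1)"
  note m = vnk_index_bounds[of "2 * y - 1"]
  have "vnk_index y = Suc ?m"
    by (rule vnk_indexI) (use m assms in \<open>auto simp: field_simps\<close>)
  thus ?thesis unfolding vnk_def by (simp add: field_simps)
qed

lemma real_of_nat_less_two_power: "k < (2::nat) ^ N \<Longrightarrow> real k + 1 \<le> 2 ^ N"
proof -
  assume "k < 2 ^ N"
  hence "real (Suc k) \<le> real ((2::nat) ^ N)" by (simp only: of_nat_le_iff)
  thus ?thesis by simp
qed

text \<open>Block \<open>k\<close> of level \<open>N + 1\<close> lies in the lower half, where vnk adds \<open>1/2\<close>, iff
  \<open>k < 2 ^ N\<close>; on the upper half vnk is a half-size copy of itself (\<open>vnk_upper_half\<close>).\<close>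
fun vnk_label :: "nat \<Rightarrow> nat \<Rightarrow> nat" where
  "vnk_label 0 k = 0"
| "vnk_label (Suc N) k = (if k < 2 ^ N then k + 2 ^ N else vnk_label N (k - 2 ^ N))"

lemma vnk_label_less: "k < 2 ^ N \<Longrightarrow> vnk_label N k < 2 ^ N"
proof (induction N arbitrary: k)
  case (Suc N)
  show ?case
  proof (cases "k < 2 ^ N")
    case False
    with Suc.prems have "k - 2 ^ N < 2 ^ N" by simp
    with Suc.IH False show ?thesis by fastforce
  qed (use Suc.prems in simp)
qed simp

lemma vnk_label_inj: "inj_on (vnk_label N) {..<2 ^ N}"
proof (induction N)
  case (Suc N)
  show ?case
  proof (rule inj_onI)
    fix a b assume a: "a \<in> {..<2 ^ Suc N}" and b: "b \<in> {..<2 ^ Suc N}"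
      and eq: "vnk_label (Suc N) a = vnk_label (Suc N) b"
    have upper: "vnk_label N (k - 2 ^ N) < 2 ^ N" if "k \<in> {..<2 ^ Suc N}" for k
      using vnk_label_less[of "k - 2 ^ N" N] that by auto
    show "a = b"
      by (cases "a < 2 ^ N"; cases "b < 2 ^ N")
         (use eq upper[OF a] upper[OF b] Suc.IH a b in \<open>auto dest: inj_onD\<close>)
  qed
qed (auto intro: inj_onI)

lemma vnk_label_bij: "bij_betw (vnk_label N) {..<2 ^ N} {..<2 ^ N}"
  by (rule bij_betw_imageI[OF vnk_label_inj endo_inj_surj[OF _ _ vnk_label_inj]])
     (auto intro: vnk_label_less)

lemma vnk_dyadic_block:
  assumes "k < 2 ^ N" "0 \<le> y" "y < 1"
  shows "vnk ((real k + y) / 2 ^ N) =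
           (real (vnk_label N k) + (if k = 2 ^ N - 1 then vnk y else y)) / 2 ^ N"
  using assms(1)
proof (induction N arbitrary: k)
  case (Suc N)
  show ?case
  proof (cases "k < 2 ^ N")
    case True
    hence "real k + 1 \<le> 2 ^ N" by (rule real_of_nat_less_two_power)
    hence "(real k + y) / 2 ^ Suc N < 1/2" using assms(2,3) by (simp add: field_simps)
    hence "vnk ((real k + y) / 2 ^ Suc N) = (real k + y) / 2 ^ Suc N + 1/2"
      using assms(2,3) by (intro vnk_lower_half) auto
    also have "\<dots> = (real (k + 2 ^ N) + y) / 2 ^ Suc N" by (simp add: field_simps)
    moreover have "k \<noteq> 2 ^ Suc N - 1" using True by simp
    ultimately show ?thesis using True by simp
  next
    case False
    hence k: "k - 2 ^ N < 2 ^ N" "real (k - 2 ^ N) = real k - 2 ^ N"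
      using Suc.prems by (auto simp: of_nat_diff)
    have "real k + 1 \<le> 2 ^ Suc N" using Suc.prems by (rule real_of_nat_less_two_power)
    moreover have "2 ^ N \<le> real k + y"
      using False assms(2) by (metis add_increasing2 not_less of_nat_le_iff of_nat_numeral of_nat_power)
    ultimately have "1/2 \<le> (real k + y) / 2 ^ Suc N" "(real k + y) / 2 ^ Suc N < 1"
      using assms(2,3) by (simp_all add: field_simps)
    hence "vnk ((real k + y) / 2 ^ Suc N) = vnk (2 * ((real k + y) / 2 ^ Suc N) - 1) / 2"
      by (rule vnk_upper_half)
    also have "2 * ((real k + y) / 2 ^ Suc N) - 1 = (real (k - 2 ^ N) + y) / 2 ^ N"
      unfolding k(2) by (simp add: field_simps)
    finally have "vnk ((real k + y) / 2 ^ Suc N) = vnk ((real (k - 2 ^ N) + y) / 2 ^ N) / 2" .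
    moreover have "k - 2 ^ N = 2 ^ N - 1 \<longleftrightarrow> k = 2 ^ Suc N - 1" using False by auto
    ultimately show ?thesis unfolding Suc.IH[OF k(1)] using False by (simp add: mult.commute)
  qed
qed simp

fun odometer_word :: "bool list \<Rightarrow> bool list" where
  "odometer_word [] = []"
| "odometer_word (b # bs) = (if b then False # odometer_word bs else True # bs)"

fun odometer_word_inv :: "bool list \<Rightarrow> bool list" where
  "odometer_word_inv [] = []"
| "odometer_word_inv (b # bs) = (if b then False # bs else True # odometer_word_inv bs)"

lemma bij_odometer_word: "bij odometer_word"
proof (rule o_bij)
  show "odometer_word_inv \<circ> odometer_word = id"
  proof
    fix bs show "(odometer_word_inv \<circ> odometer_word) bs = id bs" by (induction bs) auto
  qed
  show "odometer_word \<circ> odometer_word_inv = id"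
  proof
    fix bs show "(odometer_word \<circ> odometer_word_inv) bs = id bs" by (induction bs) auto
  qed
qed

lemma length_odometer_word: "length (odometer_word bs) = length bs"
  by (induction bs) auto

lemma butlast_odometer_word: "butlast (odometer_word bs) = odometer_word (butlast bs)"
  by (induction bs) (simp_all, metis length_0_conv length_odometer_word)

lemma bin_digits_vnk:
  assumes "0 \<le> y" "y < 1"
  shows "map (bin_digit (vnk y)) [0..<n] = odometer_word (map (bin_digit y) [0..<n])"
  using assms
proof (induction n arbitrary: y)
  case (Suc n)
  have digits_Suc: "map (bin_digit z) [0..<Suc n] = bin_digit z 0 # map (bin_digit (2 * z)) [0..<n]" for z
    unfolding map_upt_Suc bin_digit_Suc ..
  show ?case
  proof (cases "y < 1/2")
    case True
    hence "vnk y = y + 1/2" using Suc.prems by (intro vnk_lower_half)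
    hence "bin_digit (vnk y) 0" "bin_digit (2 * vnk y) = bin_digit (2 * y)"
      using Suc.prems True bin_digit_add_of_int[of "2 * y" 1] by (simp_all add: bin_digit_0)
    moreover have "\<not> bin_digit y 0" using Suc.prems True by (simp add: bin_digit_0)
    ultimately show ?thesis unfolding digits_Suc by simp
  next
    case False
    let ?y' = "2 * y - 1"
    have y': "0 \<le> ?y'" "?y' < 1" using False Suc.prems by simp_all
    have "vnk y = vnk ?y' / 2" using False Suc.prems by (intro vnk_upper_half) simp_all
    hence "\<not> bin_digit (vnk y) 0" "2 * vnk y = vnk ?y'"
      using vnk_in_unit[OF y'] by (simp_all add: bin_digit_0)
    moreover have "bin_digit y 0" "bin_digit (2 * y) = bin_digit ?y'"
      using Suc.prems False bin_digit_add_of_int[of ?y' 1] by (simp_all add: bin_digit_0)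
    ultimately show ?thesis unfolding digits_Suc using Suc.IH[OF y'] by simp
  qed
qed simp

section \<open>Automorphisms of the grafted tree\<close>

lemma tree_parent_Some:
  "tree_parent (Some (a, bs)) = (if bs = [] then None else Some (a, butlast bs))"
  by (cases bs) auto

lemma tree_parent_in_tree_V: "v \<in> tree_V N \<Longrightarrow> tree_parent v \<in> tree_V N"
  unfolding tree_V_def by (cases v rule: tree_parent.cases) auto

lemma tree_autI:
  assumes bij: "bij_betw g (tree_V N) (tree_V N)" and root: "g None = None"
    and parent: "\<And>v. v \<in> tree_V N \<Longrightarrow> tree_parent (g v) = g (tree_parent v)"
  shows "tree_aut N g"
  unfolding tree_aut_def
proof (intro conjI bij ballI)
  fix u v assume u: "u \<in> tree_V N" and v: "v \<in> tree_V N"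
  have None: "None \<in> tree_V N" unfolding tree_V_def by simp
  have inj: "g x = g y \<longleftrightarrow> x = y" if "x \<in> tree_V N" "y \<in> tree_V N" for x y
    using bij that by (auto simp: bij_betw_def dest: inj_onD)
  have "g x = None \<longleftrightarrow> x = None" if "x \<in> tree_V N" for x
    using inj[OF that None] root by simp
  thus "tree_adj u v \<longleftrightarrow> tree_adj (g u) (g v)"
    unfolding tree_adj_def parent[OF u] parent[OF v] using u v
    by (simp add: inj tree_parent_in_tree_V)
qed

definition graft_aut :: "(nat \<Rightarrow> nat) \<Rightarrow> (nat \<Rightarrow> bool list \<Rightarrow> bool list) \<Rightarrow> vertex \<Rightarrow> vertex" where
  "graft_aut \<tau> f = map_option (\<lambda>(a, bs). (\<tau> a, f a bs))"

lemma bij_betw_graft_aut: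
  assumes \<tau>: "bij_betw \<tau> {..<2 ^ N} {..<2 ^ N}" and bij: "\<And>a. bij (f a)"
  shows "bij_betw (graft_aut \<tau> f) (tree_V N) (tree_V N)"
  unfolding bij_betw_def
proof
  have "a = a'" if "\<tau> a = \<tau> a'" "a < 2 ^ N" "a' < 2 ^ N" for a a'
    using \<tau> that by (auto simp: bij_betw_def dest: inj_onD)
  moreover have "bs = bs'" if "f a bs = f a bs'" for a bs bs'
    using bij[of a] that by (auto simp: bij_def dest: injD)
  ultimately show "inj_on (graft_aut \<tau> f) (tree_V N)"
    unfolding inj_on_def tree_V_def graft_aut_def by (auto, metis)
  show "graft_aut \<tau> f ` tree_V N = tree_V N"
  proof
    show "graft_aut \<tau> f ` tree_V N \<subseteq> tree_V N"
      using \<tau> unfolding tree_V_def graft_aut_def bij_betw_def by auto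
    show "tree_V N \<subseteq> graft_aut \<tau> f ` tree_V N"
    proof
      fix v assume "v \<in> tree_V N"
      then consider "v = None" | b cs where "v = Some (b, cs)" "b < 2 ^ N"
        unfolding tree_V_def by auto
      then show "v \<in> graft_aut \<tau> f ` tree_V N"
      proof cases
        case 1
        then show ?thesis by (force simp: tree_V_def graft_aut_def)
      next
        case 2
        obtain a where "a < 2 ^ N" "\<tau> a = b"
          using \<tau> 2(2) by (metis bij_betw_def imageE lessThan_iff)
        moreover obtain bs where "f a bs = cs" using bij[of a] by (metis bij_def surj_def)
        ultimately have "v = graft_aut \<tau> f (Some (a, bs))" "Some (a, bs) \<in> tree_V N"
          using 2 by (auto simp: graft_aut_def tree_V_def)
        thus ?thesis by blast
      qed
    qed
  qed
qed

lemma tree_aut_graft_aut: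
  assumes \<tau>: "bij_betw \<tau> {..<2 ^ N} {..<2 ^ N}"
    and bij: "\<And>a. bij (f a)"
    and length: "\<And>a bs. length (f a bs) = length bs"
    and butlast: "\<And>a bs. butlast (f a bs) = f a (butlast bs)"
  shows "tree_aut N (graft_aut \<tau> f)"
proof (rule tree_autI)
  show "bij_betw (graft_aut \<tau> f) (tree_V N) (tree_V N)" using \<tau> bij by (rule bij_betw_graft_aut)
  show "graft_aut \<tau> f None = None" by (simp add: graft_aut_def)
  have "f a bs = [] \<longleftrightarrow> bs = []" for a bs
    using length[of a bs] by auto
  thus "tree_parent (graft_aut \<tau> f v) = graft_aut \<tau> f (tree_parent v)" for v
    by (cases v) (auto simp: graft_aut_def tree_parent_Some butlast)
qed

lemma bdry_map_graft_aut:
  "bdry_map (graft_aut \<tau> f) (a, s) = (\<tau> a, \<lambda>i. last (f a (map s [0..<Suc i])))"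
  unfolding bdry_map_def path_vertex_def graft_aut_def by simp

definition odometer_tree_aut :: "nat \<Rightarrow> (nat \<Rightarrow> nat) \<Rightarrow> vertex \<Rightarrow> vertex" where
  "odometer_tree_aut N \<pi> =
     graft_aut (vnk_label N \<circ> \<pi>) (\<lambda>a. if \<pi> a = 2 ^ N - 1 then odometer_word else id)"

lemma tree_aut_odometer_tree_aut:
  assumes "\<pi> permutes {..<2 ^ N}"
  shows "tree_aut N (odometer_tree_aut N \<pi>)"
  unfolding odometer_tree_aut_def
proof (rule tree_aut_graft_aut)
  show "bij_betw (vnk_label N \<circ> \<pi>) {..<2 ^ N} {..<2 ^ N}"
    using bij_betw_trans[OF permutes_imp_bij[OF assms] vnk_label_bij] .
qed (simp_all add: bij_odometer_word length_odometer_word butlast_odometer_word)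

definition tree_coding :: "nat \<Rightarrow> real \<Rightarrow> bpoint" where
  "tree_coding N x = (nat \<lfloor>2 ^ N * x\<rfloor>, bin_digit (frac (2 ^ N * x)))"

lemma dyadic_block_cases:
  fixes x :: real
  assumes "0 \<le> x" "x < 1"
  obtains k y where "k < 2 ^ N" "0 \<le> y" "y < 1" "x = (real k + y) / 2 ^ N"
proof
  let ?k = "nat \<lfloor>2 ^ N * x\<rfloor>"
  have "0 \<le> \<lfloor>2 ^ N * x\<rfloor>" "\<lfloor>2 ^ N * x\<rfloor> < 2 ^ N"
    using assms by (simp_all add: floor_less_iff)
  thus "?k < 2 ^ N" by (simp add: nat_less_iff)
  show "0 \<le> frac (2 ^ N * x)" "frac (2 ^ N * x) < 1" by (simp_all add: frac_lt_1)
  show "x = (real ?k + frac (2 ^ N * x)) / 2 ^ N"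
    using \<open>0 \<le> \<lfloor>2 ^ N * x\<rfloor>\<close> by (simp add: frac_def)
qed

lemma dyadic_block_in_unit:
  assumes "k < (2::nat) ^ N" "0 \<le> y" "y < 1"
  shows "0 \<le> (real k + y) / 2 ^ N" "(real k + y) / 2 ^ N < 1"
  using assms real_of_nat_less_two_power[OF assms(1)] by (simp_all add: field_simps)

lemma tree_coding_block:
  assumes "0 \<le> y" "y < 1"
  shows "tree_coding N ((real k + y) / 2 ^ N) = (k, bin_digit y)"
proof -
  have "\<lfloor>real k + y\<rfloor> = int k" using assms by (simp add: floor_eq_iff)
  thus ?thesis unfolding tree_coding_def frac_def by simp
qed

lemma iet_block:
  assumes "k < q" "0 \<le> y" "y < 1"
  shows "iet q \<pi> ((real k + y) / real q) = (real (\<pi> k) + y) / real q"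
proof -
  have "\<lfloor>real q * ((real k + y) / real q)\<rfloor> = int k"
    using assms by (simp add: floor_eq_iff)
  thus ?thesis unfolding iet_def Let_def using assms(1) by (simp add: field_simps)
qed

lemma rot_odometer_block:
  assumes "k < 2 ^ N" "0 \<le> y" "y < 1"
  shows "rot_odometer (2 ^ N) \<pi> ((real k + y) / 2 ^ N) = vnk ((real (\<pi> k) + y) / 2 ^ N)"
  using iet_block[OF assms, of \<pi>] unfolding rot_odometer_def by simp

lemma rot_odometer_in_unit:
  assumes "\<pi> permutes {..<2 ^ N}" "0 \<le> x" "x < 1"
  shows "0 \<le> rot_odometer (2 ^ N) \<pi> x" "rot_odometer (2 ^ N) \<pi> x < 1"
proof -
  obtain k y where ky: "k < 2 ^ N" "0 \<le> y" "y < 1" "x = (real k + y) / 2 ^ N"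
    using dyadic_block_cases[OF assms(2,3)] .
  have "\<pi> k < 2 ^ N" using permutes_in_image[OF assms(1)] ky(1) by simp
  thus "0 \<le> rot_odometer (2 ^ N) \<pi> x" "rot_odometer (2 ^ N) \<pi> x < 1"
    unfolding ky(4) rot_odometer_block[OF ky(1-3)]
    using vnk_in_unit[OF dyadic_block_in_unit[OF _ ky(2,3)]] by (simp_all add: less_imp_le)
qed

lemma tree_coding_rot_odometer:
  assumes "\<pi> permutes {..<2 ^ N}" "0 \<le> x" "x < 1"
  shows "tree_coding N (rot_odometer (2 ^ N) \<pi> x) =
           bdry_map (odometer_tree_aut N \<pi>) (tree_coding N x)"
proof -
  obtain k y where ky: "k < 2 ^ N" "0 \<le> y" "y < 1" "x = (real k + y) / 2 ^ N"
    using dyadic_block_cases[OF assms(2,3)] .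
  have "\<pi> k < 2 ^ N" using permutes_in_image[OF assms(1)] ky(1) by simp
  let ?last = "\<pi> k = 2 ^ N - 1"
  have "rot_odometer (2 ^ N) \<pi> x =
          (real (vnk_label N (\<pi> k)) + (if ?last then vnk y else y)) / 2 ^ N"
    unfolding ky(4) rot_odometer_block[OF ky(1-3)] using vnk_dyadic_block[OF \<open>\<pi> k < 2 ^ N\<close> ky(2,3)] .
  moreover have "0 \<le> (if ?last then vnk y else y)" "(if ?last then vnk y else y) < 1"
    using vnk_in_unit[OF ky(2,3)] ky(2,3) by simp_all
  ultimately have lhs: "tree_coding N (rot_odometer (2 ^ N) \<pi> x) =
      (vnk_label N (\<pi> k), if ?last then bin_digit (vnk y) else bin_digit y)"
    by (simp add: tree_coding_block)
  have rhs: "tree_coding N x = (k, bin_digit y)"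
    unfolding ky(4) by (rule tree_coding_block[OF ky(2,3)])
  have "last (map s [0..<Suc i]) = s i" for s :: "nat \<Rightarrow> bool" and i
    by simp
  moreover have "last (odometer_word (map (bin_digit y) [0..<Suc i])) = bin_digit (vnk y) i" for i
    unfolding bin_digits_vnk[OF ky(2,3), symmetric] by simp
  ultimately show ?thesis
    unfolding lhs rhs odometer_tree_aut_def bdry_map_graft_aut by (simp del: upt_Suc)
qed

section \<open>Binary digits of a uniform point\<close>

lemma emeasure_lborel_affine_vimage:
  fixes c t :: real
  assumes S: "S \<in> sets borel" and c: "c \<noteq> 0"
  shows "emeasure lborel ((\<lambda>x. c * x + t) -` S) = ennreal (1 / \<bar>c\<bar>) * emeasure lborel S"
proof -
  define g where "g = (\<lambda>x. - t / c + (1 / c) * x)"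
  have lborel: "lborel = density (distr lborel borel g) (\<lambda>_. ennreal \<bar>1 / c\<bar>)"
    using lborel_real_affine[of "1 / c" "- t / c", folded g_def] c by simp
  have pre: "g -` (\<lambda>x. c * x + t) -` S = S" using c by (auto simp: g_def field_simps)
  have g_borel: "g \<in> borel_measurable borel" unfolding g_def by simp
  have pre_borel: "(\<lambda>x. c * x + t) -` S \<in> sets borel"
    using measurable_sets[of "\<lambda>x. c * x + t" borel borel S] S by simp
  have "emeasure lborel ((\<lambda>x. c * x + t) -` S) =
          ennreal (1 / \<bar>c\<bar>) * emeasure (distr lborel borel g) ((\<lambda>x. c * x + t) -` S)"
    using pre_borel by (subst lborel) (simp add: emeasure_density nn_integral_cmult_indicator)
  also have "\<dots> = ennreal (1 / \<bar>c\<bar>) * emeasure lborel S"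
    using pre_borel g_borel by (simp add: emeasure_distr pre)
  finally show ?thesis .
qed

lemma emeasure_lborel_scaled_copies:
  assumes D: "D \<in> sets borel" "D \<subseteq> {0..<1}" and A: "finite A" and q: "0 < (q::real)"
  shows "emeasure lborel (\<Union>a\<in>A. (\<lambda>x. q * x - real a) -` D) =
           ennreal (real (card A) / q) * emeasure lborel D"
proof -
  have copy: "emeasure lborel ((\<lambda>x. q * x - real a) -` D) = ennreal (1 / q) * emeasure lborel D"
    for a :: nat using emeasure_lborel_affine_vimage[OF D(1), of "q" "- real a"] q by simp
  have "disjoint_family_on (\<lambda>a. (\<lambda>x. q * x - real a) -` D) A"
    unfolding disjoint_family_on_def
  proof (intro ballI impI)
    fix a b :: nat assume "a \<noteq> b"
    have floor: "\<lfloor>q * x\<rfloor> = int a" if "x \<in> (\<lambda>x. q * x - real a) -` D" for a :: nat and x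
      using that D(2) by (auto simp: floor_eq_iff)
    show "(\<lambda>x. q * x - real a) -` D \<inter> (\<lambda>x. q * x - real b) -` D = {}"
      using floor[of _ a] floor[of _ b] \<open>a \<noteq> b\<close> by (auto, metis of_nat_eq_iff)
  qed
  hence "emeasure lborel (\<Union>a\<in>A. (\<lambda>x. q * x - real a) -` D) =
           (\<Sum>a\<in>A. emeasure lborel ((\<lambda>x. q * x - real a) -` D))"
    using A D(1) by (subst sum_emeasure) (auto simp: measurable_sets_borel[OF _ D(1)])
  also have "\<dots> = of_nat (card A) * (ennreal (1 / q) * emeasure lborel D)"
    by (simp add: copy)
  also have "\<dots> = ennreal (real (card A) / q) * emeasure lborel D"
  proof -
    have "of_nat (card A) * ennreal (1 / q) = ennreal (real (card A) / q)"
      using q by (simp add: ennreal_of_nat_eq_real_of_nat flip: ennreal_mult)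
    thus ?thesis by (simp add: mult.assoc[symmetric])
  qed
  finally show ?thesis .
qed

definition digit_cylinder :: "nat \<Rightarrow> (nat \<Rightarrow> bool set) \<Rightarrow> real set" where
  "digit_cylinder n A = {y \<in> {0..<1}. \<forall>j<n. bin_digit y j \<in> A j}"

lemma digit_cylinder_Suc:
  "digit_cylinder (Suc n) A =
     (\<Union>a\<in>of_bool ` A 0. (\<lambda>x. 2 * x - real a) -` digit_cylinder n (\<lambda>j. A (Suc j)))"
proof (intro set_eqI iffI)
  fix y assume y: "y \<in> digit_cylinder (Suc n) A"
  let ?b = "bin_digit y 0"
  have "0 \<le> 2 * y - of_bool ?b" "2 * y - of_bool ?b < 1"
    using y by (auto simp: digit_cylinder_def bin_digit_0)
  moreover have "?b \<in> A 0" "\<forall>j<n. bin_digit y (Suc j) \<in> A (Suc j)"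
    using y by (auto simp: digit_cylinder_def)
  ultimately show "y \<in> (\<Union>a\<in>of_bool ` A 0. (\<lambda>x. 2 * x - real a) -` digit_cylinder n (\<lambda>j. A (Suc j)))"
    by (auto simp: digit_cylinder_def bin_digit_shift intro!: bexI[of _ ?b])
next
  fix y assume "y \<in> (\<Union>a\<in>of_bool ` A 0. (\<lambda>x. 2 * x - real a) -` digit_cylinder n (\<lambda>j. A (Suc j)))"
  then obtain b where b: "b \<in> A 0" "0 \<le> 2 * y - of_bool b" "2 * y - of_bool b < 1"
    and digits: "\<forall>j<n. bin_digit y (Suc j) \<in> A (Suc j)"
    by (auto simp: digit_cylinder_def bin_digit_shift)
  have "0 \<le> y" "y < 1" "bin_digit y 0 = b" using b(2,3) by (cases b; simp add: bin_digit_0)+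
  thus "y \<in> digit_cylinder (Suc n) A"
    using b(1) digits by (auto simp: digit_cylinder_def less_Suc_eq_0_disj)
qed

lemma emeasure_digit_cylinder:
  "emeasure lborel (digit_cylinder n A) = (\<Prod>j<n. ennreal (real (card (A j)) / 2))"
proof (induction n arbitrary: A)
  case 0
  have "digit_cylinder 0 A = {0..<1}" by (auto simp: digit_cylinder_def)
  thus ?case by simp
next
  case (Suc n)
  have "card (of_bool ` A 0 :: nat set) = card (A 0)"
    by (rule card_image) (simp add: inj_on_def)
  hence "emeasure lborel (digit_cylinder (Suc n) A) =
           ennreal (real (card (A 0)) / 2) * emeasure lborel (digit_cylinder n (\<lambda>j. A (Suc j)))"
    unfolding digit_cylinder_Suc
    by (subst emeasure_lborel_scaled_copies) (auto simp: digit_cylinder_def)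
  thus ?case by (simp only: Suc.IH prod.lessThan_Suc_shift)
qed

abbreviation coin_flips :: "(nat \<Rightarrow> bool) measure" where
  "coin_flips \<equiv> \<Pi>\<^sub>M j\<in>UNIV. uniform_count_measure UNIV"

lemma emeasure_fair_coin: "emeasure (uniform_count_measure (UNIV :: bool set)) B = ennreal (real (card B) / 2)"
  by (subst emeasure_uniform_count_measure) (simp_all add: ennreal_of_nat_eq_real_of_nat divide_ennreal)

lemma space_leb_I [simp]: "space leb_I = {0..<1}"
  by (simp add: leb_I_def)

lemma emeasure_leb_I: "A \<subseteq> {0..<1} \<Longrightarrow> emeasure leb_I A = emeasure lborel A"
  unfolding leb_I_def by (rule emeasure_restrict_space) auto

lemma measurable_leb_I: "f \<in> measurable borel M \<Longrightarrow> f \<in> measurable leb_I M"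
  unfolding leb_I_def by (rule measurable_restrict_space1) simp

lemma bin_digits_measurable: "bin_digit \<in> measurable borel coin_flips"
proof (rule measurable_PiM_single')
  show "(\<lambda>y. bin_digit y j) \<in> measurable borel (uniform_count_measure UNIV)" for j
    by (subst measurable_cong_sets[OF refl sets_uniform_count_measure_count_space]) simp
qed (simp add: space_uniform_count_measure)

lemma distr_bin_digits: "distr leb_I coin_flips bin_digit = coin_flips"
proof -
  interpret product_prob_space "\<lambda>_::nat. uniform_count_measure (UNIV :: bool set)" UNIV
    by (rule product_prob_spaceI) (simp add: prob_space_uniform_count_measure)
  show ?thesis
  proof (rule PiM_eq)
    fix J :: "nat set" and F :: "nat \<Rightarrow> bool set" assume J: "finite J"
    obtain n where n: "J \<subseteq> {..<n}" using finite_nat_bounded[OF J] by blast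
    define F' where "F' j = (if j \<in> J then F j else UNIV)" for j
    let ?C = "prod_emb UNIV (\<lambda>_. uniform_count_measure UNIV) J (Pi\<^sub>E J F)"
    have C: "?C \<in> sets coin_flips"
      using J by (intro sets_PiM_I) (auto simp: sets_uniform_count_measure)
    have "bin_digit -` ?C \<inter> space leb_I = digit_cylinder n F'"
      using n by (auto simp: digit_cylinder_def prod_emb_def F'_def space_uniform_count_measure) blast
    hence "emeasure (distr leb_I coin_flips bin_digit) ?C = emeasure leb_I (digit_cylinder n F')"
      using C by (simp add: emeasure_distr measurable_leb_I[OF bin_digits_measurable])
    also have "\<dots> = (\<Prod>j<n. ennreal (real (card (F' j)) / 2))"
      by (subst emeasure_leb_I) (auto simp: digit_cylinder_def emeasure_digit_cylinder[symmetric])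
    also have "\<dots> = (\<Prod>j\<in>J. ennreal (real (card (F j)) / 2))"
      using n by (intro prod.mono_neutral_cong_right) (auto simp: F'_def)
    finally show "emeasure (distr leb_I coin_flips bin_digit) ?C =
        (\<Prod>j\<in>J. emeasure (uniform_count_measure UNIV) (F j))"
      by (simp add: emeasure_fair_coin)
  qed simp
qed

lemma space_mu_N: "space (mu_N N) = {..<2 ^ N} \<times> UNIV"
  by (auto simp: mu_N_def space_pair_measure space_PiM space_uniform_count_measure)

lemma tree_coding_in_space:
  assumes "0 \<le> x" "x < 1"
  shows "tree_coding N x \<in> space (mu_N N)"
proof -
  obtain k y where "k < 2 ^ N" "0 \<le> y" "y < 1" "x = (real k + y) / 2 ^ N"
    using dyadic_block_cases[OF assms] .
  thus ?thesis by (simp add: tree_coding_block space_mu_N)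
qed

lemma tree_coding_measurable: "tree_coding N \<in> measurable leb_I (mu_N N)"
  unfolding mu_N_def tree_coding_def
proof (rule measurable_Pair)
  have "(\<lambda>x. nat \<lfloor>2 ^ N * x\<rfloor>) \<in> measurable leb_I (restrict_space (count_space UNIV) {..<2 ^ N})"
  proof (rule measurable_restrict_space2)
    show "(\<lambda>x. nat \<lfloor>2 ^ N * x\<rfloor>) \<in> space leb_I \<rightarrow> {..<2 ^ N}"
      using tree_coding_in_space[of _ N] by (auto simp: tree_coding_def space_mu_N)
    show "(\<lambda>x. nat \<lfloor>2 ^ N * x\<rfloor>) \<in> measurable leb_I (count_space UNIV)"
      by (rule measurable_leb_I) measurable
  qed
  thus "(\<lambda>x. nat \<lfloor>2 ^ N * x\<rfloor>) \<in> measurable leb_I (uniform_count_measure {..<2 ^ N})"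
    by (subst measurable_cong_sets[OF refl sets_uniform_count_measure_count_space])
       (simp add: restrict_count_space)
  show "(\<lambda>x. bin_digit (frac (2 ^ N * x))) \<in> measurable leb_I coin_flips"
    by (rule measurable_leb_I, rule measurable_compose[OF _ bin_digits_measurable])
       (simp add: frac_def)
qed

lemma tree_coding_vimage_rectangle:
  assumes "A \<subseteq> {..<2 ^ N}"
  shows "tree_coding N -` (A \<times> B) \<inter> {0..<1} =
           (\<Union>a\<in>A. (\<lambda>x. 2 ^ N * x - real a) -` (bin_digit -` B \<inter> {0..<1}))"
proof (intro set_eqI iffI)
  fix x assume x: "x \<in> tree_coding N -` (A \<times> B) \<inter> {0..<1}"
  then obtain k y where "k < 2 ^ N" "0 \<le> y" "y < 1" "x = (real k + y) / 2 ^ N"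
    using dyadic_block_cases[of x N] by auto
  with x show "x \<in> (\<Union>a\<in>A. (\<lambda>x. 2 ^ N * x - real a) -` (bin_digit -` B \<inter> {0..<1}))"
    by (auto simp: tree_coding_block intro!: bexI[of _ k])
next
  fix x assume "x \<in> (\<Union>a\<in>A. (\<lambda>x. 2 ^ N * x - real a) -` (bin_digit -` B \<inter> {0..<1}))"
  then obtain a where a: "a \<in> A" and y: "0 \<le> 2 ^ N * x - real a" "2 ^ N * x - real a < 1"
    and B: "bin_digit (2 ^ N * x - real a) \<in> B" by auto
  have "a < 2 ^ N" using a assms by auto
  have "tree_coding N x = (a, bin_digit (2 ^ N * x - real a))"
    using tree_coding_block[OF y, of N a] by simp
  moreover have "0 \<le> x" "x < 1" using dyadic_block_in_unit[OF \<open>a < 2 ^ N\<close> y] by simp_all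
  ultimately show "x \<in> tree_coding N -` (A \<times> B) \<inter> {0..<1}" using a B by simp
qed

lemma emeasure_lborel_bin_digits_vimage:
  assumes "B \<in> sets coin_flips"
  shows "emeasure lborel (bin_digit -` B \<inter> {0..<1}) = emeasure coin_flips B"
proof -
  have "emeasure coin_flips B = emeasure (distr leb_I coin_flips bin_digit) B"
    by (simp only: distr_bin_digits)
  also have "\<dots> = emeasure lborel (bin_digit -` B \<inter> {0..<1})"
    using assms by (simp add: emeasure_distr measurable_leb_I[OF bin_digits_measurable] emeasure_leb_I)
  finally show ?thesis ..
qed

lemma emeasure_tree_coding_vimage_rectangle:
  assumes A: "A \<subseteq> {..<2 ^ N}" and B: "B \<in> sets coin_flips"
  shows "emeasure leb_I (tree_coding N -` (A \<times> B) \<inter> {0..<1}) =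
           ennreal (real (card A) / 2 ^ N) * emeasure coin_flips B"
proof -
  let ?D = "bin_digit -` B \<inter> {0..<1}"
  have D: "?D \<in> sets borel" "?D \<subseteq> {0..<1}"
    using measurable_sets[OF bin_digits_measurable B] by auto
  have "finite A" using A by (rule finite_subset) simp
  have "emeasure leb_I (tree_coding N -` (A \<times> B) \<inter> {0..<1}) =
          emeasure lborel (\<Union>a\<in>A. (\<lambda>x. 2 ^ N * x - real a) -` ?D)"
    unfolding tree_coding_vimage_rectangle[OF A, symmetric] by (rule emeasure_leb_I) simp
  also have "\<dots> = ennreal (real (card A) / 2 ^ N) * emeasure lborel ?D"
    using emeasure_lborel_scaled_copies[OF D \<open>finite A\<close>, of "2 ^ N"] by simp
  finally show ?thesis by (simp add: emeasure_lborel_bin_digits_vimage[OF B])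
qed

lemma distr_tree_coding: "distr leb_I (mu_N N) (tree_coding N) = mu_N N"
proof -
  have "uniform_count_measure {..<2 ^ N} \<Otimes>\<^sub>M coin_flips =
          distr leb_I (uniform_count_measure {..<2 ^ N} \<Otimes>\<^sub>M coin_flips) (tree_coding N)"
  proof (rule pair_measure_eqI)
    show "sigma_finite_measure (uniform_count_measure {..<(2::nat) ^ N})"
      by (intro prob_space_imp_sigma_finite prob_space_uniform_count_measure)
         (auto simp: lessThan_empty_iff)
    show "sigma_finite_measure coin_flips"
      by (intro prob_space_imp_sigma_finite prob_space_PiM prob_space_uniform_count_measure) auto
    fix A :: "nat set" and B
    assume A: "A \<in> sets (uniform_count_measure {..<2 ^ N})" and B: "B \<in> sets coin_flips"
    have A_sub: "A \<subseteq> {..<2 ^ N}" using A by (simp add: sets_uniform_count_measure)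
    have "emeasure (uniform_count_measure {..<2 ^ N}) A = ennreal (real (card A) / 2 ^ N)"
      using A_sub by (simp add: emeasure_uniform_count_measure ennreal_of_nat_eq_real_of_nat divide_ennreal)
    moreover have "emeasure (distr leb_I (uniform_count_measure {..<2 ^ N} \<Otimes>\<^sub>M coin_flips) (tree_coding N)) (A \<times> B)
        = emeasure leb_I (tree_coding N -` (A \<times> B) \<inter> {0..<1})"
      using A B by (subst emeasure_distr) (simp_all add: tree_coding_measurable[unfolded mu_N_def])
    ultimately show "emeasure (uniform_count_measure {..<2 ^ N}) A * emeasure coin_flips B =
        emeasure (distr leb_I (uniform_count_measure {..<2 ^ N} \<Otimes>\<^sub>M coin_flips) (tree_coding N)) (A \<times> B)"
      by (simp add: emeasure_tree_coding_vimage_rectangle[OF A_sub B])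
  qed simp
  thus ?thesis unfolding mu_N_def by simp
qed

definition tree_decoding :: "nat \<Rightarrow> bpoint \<Rightarrow> real" where
  "tree_decoding N z = (real (fst z) + (\<Sum>j. of_bool (snd z j) / 2 ^ Suc j)) / 2 ^ N"

lemma tree_decoding_coding:
  assumes "0 \<le> x" "x < 1"
  shows "tree_decoding N (tree_coding N x) = x"
proof -
  obtain k y where ky: "k < 2 ^ N" "0 \<le> y" "y < 1" "x = (real k + y) / 2 ^ N"
    using dyadic_block_cases[OF assms] .
  have "(\<Sum>j. of_bool (bin_digit y j) / 2 ^ Suc j) = frac y"
    by (rule sums_unique[OF bin_digit_sums, symmetric])
  also have "frac y = y" using ky(2,3) by (simp add: frac_eq)
  finally have "(\<Sum>j. of_bool (bin_digit y j) / 2 ^ Suc j) = y" .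
  thus ?thesis unfolding ky(4) tree_coding_block[OF ky(2,3)] tree_decoding_def by simp
qed

lemma mu_N_fst_measurable [measurable]: "fst \<in> measurable (mu_N N) (count_space UNIV)"
  unfolding mu_N_def
  by (rule measurable_compose[OF measurable_fst])
     (simp add: measurable_cong_sets[OF sets_uniform_count_measure_count_space refl])

lemma mu_N_snd_measurable [measurable]: "(\<lambda>z. snd z j) \<in> measurable (mu_N N) (count_space UNIV)"
  unfolding mu_N_def
  by (rule measurable_compose[OF measurable_snd measurable_compose[OF measurable_component_singleton]])
     (simp_all add: measurable_cong_sets[OF sets_uniform_count_measure_count_space refl])

lemma tree_decoding_measurable [measurable]: "tree_decoding N \<in> borel_measurable (mu_N N)"
  unfolding tree_decoding_def by measurable

lemma measurable_equality_set_countable: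
  fixes f g :: "'a \<Rightarrow> 'b::countable"
  assumes "f \<in> measurable M (count_space UNIV)" "g \<in> measurable M (count_space UNIV)"
  shows "{x \<in> space M. f x = g x} \<in> sets M"
proof -
  have "{x \<in> space M. f x = g x} = (\<Union>c. (f -` {c} \<inter> space M) \<inter> (g -` {c} \<inter> space M))"
    by auto
  thus ?thesis using assms by (simp add: measurable_sets sets.countable_UN' sets.Int)
qed

lemma tree_coding_image:
  "tree_coding N ` {0..<1} =
     {z \<in> space (mu_N N). tree_decoding N z \<in> {0..<1} \<and> tree_coding N (tree_decoding N z) = z}"
  using tree_decoding_coding[of _ N] tree_coding_in_space[of _ N] by force

lemma tree_coding_image_sets: "tree_coding N ` {0..<1} \<in> sets (mu_N N)"
proof -
  let ?c = "\<lambda>z. tree_coding N (tree_decoding N z)"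
  have "{z \<in> space (mu_N N). fst (?c z) = fst z} \<in> sets (mu_N N)"
    by (rule measurable_equality_set_countable) (simp_all add: tree_coding_def)
  moreover have "{z \<in> space (mu_N N). snd (?c z) j = snd z j} \<in> sets (mu_N N)" for j
  proof (rule measurable_equality_set_countable)
    show "(\<lambda>z. snd (?c z) j) \<in> measurable (mu_N N) (count_space UNIV)"
      unfolding tree_coding_def snd_conv
      by (rule measurable_compose[OF _ bin_digit_measurable]) (simp add: frac_def)
  qed simp
  moreover have "tree_coding N ` {0..<1} =
          {z \<in> space (mu_N N). tree_decoding N z \<in> {0..<1}} \<inter>
          {z \<in> space (mu_N N). fst (?c z) = fst z} \<inter>
          (\<Inter>j. {z \<in> space (mu_N N). snd (?c z) j = snd z j})"
    unfolding tree_coding_image by (auto simp: prod_eq_iff fun_eq_iff)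
  ultimately show ?thesis by (simp only:) (intro sets.Int sets.countable_INT'; auto)
qed

lemma tree_decoding_measurable_on_image:
  "tree_decoding N \<in> measurable (restrict_space (mu_N N) (tree_coding N ` {0..<1})) leb_I"
  unfolding leb_I_def
proof (rule measurable_restrict_space2)
  show "tree_decoding N \<in> space (restrict_space (mu_N N) (tree_coding N ` {0..<1})) \<rightarrow> {0..<1}"
    by (auto simp: space_restrict_space tree_decoding_coding)
  show "tree_decoding N \<in> measurable (restrict_space (mu_N N) (tree_coding N ` {0..<1})) lborel"
    by (rule measurable_restrict_space1) (simp add: measurable_lborel2)
qed

lemma meas_iso_conjI:
  assumes \<phi>: "\<phi> \<in> measurable M M'" and preserving: "distr M M' \<phi> = M'"
    and image: "\<phi> ` space M \<in> sets M'"
    and \<psi>: "\<psi> \<in> measurable (restrict_space M' (\<phi> ` space M)) M"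
    and inverse: "\<And>x. x \<in> space M \<Longrightarrow> \<psi> (\<phi> x) = x"
    and T: "\<And>x. x \<in> space M \<Longrightarrow> T x \<in> space M"
    and conj: "\<And>x. x \<in> space M \<Longrightarrow> \<phi> (T x) = T' (\<phi> x)"
  shows "meas_iso_conj M T M' T' \<phi>"
  unfolding meas_iso_conj_def
proof (intro exI conjI ballI)
  let ?X = "space M" and ?Y = "\<phi> ` space M"
  have emeasure_M': "emeasure M' A = emeasure M (\<phi> -` A \<inter> ?X)" if "A \<in> sets M'" for A
    using that by (subst (1) preserving[symmetric]) (simp add: emeasure_distr[OF \<phi>])
  have inj: "inj_on \<phi> ?X" by (rule inj_on_inverseI[of _ \<psi>]) (use inverse in auto)
  show "?X \<in> sets M" "?Y \<in> sets M'" "emeasure M (space M - ?X) = 0" by (simp_all add: image)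
  have "\<phi> -` (space M' - ?Y) \<inter> ?X = {}" by blast
  thus "emeasure M' (space M' - ?Y) = 0"
    using emeasure_M'[of "space M' - ?Y"] image by auto
  show "T ` ?X \<subseteq> ?X" "T' ` ?Y \<subseteq> ?Y" using T conj by (auto simp flip: conj)
  show "bij_betw \<phi> ?X ?Y" using inj by (simp add: bij_betw_def)
  show "\<phi> \<in> measurable (restrict_space M ?X) (restrict_space M' ?Y)"
    by (intro measurable_restrict_space1 measurable_restrict_space2 \<phi>) auto
  have "\<psi> \<in> measurable (restrict_space M' ?Y) (restrict_space M ?X)"
    by (rule measurable_restrict_space2) (use \<psi> measurable_space in auto)
  moreover have "the_inv_into ?X \<phi> y = \<psi> y" if "y \<in> space (restrict_space M' ?Y)" for y
    using that inj inverse by (auto simp: space_restrict_space the_inv_into_f_f)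
  ultimately show "the_inv_into ?X \<phi> \<in> measurable (restrict_space M' ?Y) (restrict_space M ?X)"
    by (simp cong: measurable_cong)
  show "emeasure M (\<phi> -` A \<inter> ?X) = emeasure M' A" if "A \<in> sets M'" for A
    using emeasure_M'[OF that] by simp
  show "\<phi> (T x) = T' (\<phi> x)" if "x \<in> ?X" for x using conj[OF that] .
qed

theorem theorem1p5:
  fixes N :: nat and \<pi> :: "nat \<Rightarrow> nat"
  assumes "N \<ge> 1"
    and "\<pi> permutes {..<2 ^ N}"
  shows "\<exists>g. tree_aut N g \<and>
           (\<exists>\<phi>. meas_iso_conj leb_I (rot_odometer (2 ^ N) \<pi>) (mu_N N) (bdry_map g) \<phi>)"
proof (intro exI conjI)
  show "tree_aut N (odometer_tree_aut N \<pi>)"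
    using tree_aut_odometer_tree_aut[OF assms(2)] .
  show "meas_iso_conj leb_I (rot_odometer (2 ^ N) \<pi>) (mu_N N)
          (bdry_map (odometer_tree_aut N \<pi>)) (tree_coding N)"
  proof (rule meas_iso_conjI[where \<psi> = "tree_decoding N"])
    show "tree_coding N \<in> measurable leb_I (mu_N N)" by (rule tree_coding_measurable)
    show "distr leb_I (mu_N N) (tree_coding N) = mu_N N" by (rule distr_tree_coding)
    show "tree_coding N ` space leb_I \<in> sets (mu_N N)"
      using tree_coding_image_sets by simp
    show "tree_decoding N \<in> measurable (restrict_space (mu_N N) (tree_coding N ` space leb_I)) leb_I"
      using tree_decoding_measurable_on_image by simp
  qed (use assms(2) in \<open>auto simp: tree_decoding_coding rot_odometer_in_unit tree_coding_rot_odometer\<close>)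
qed

end
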